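(* In the matching game defined by a market $\mathbf{M}=(\mathbf{P},\mathbf{A},\mathbf{O})$, for every pure-strategy Nash equilibrium $a$ the match $\mu(a)$ is stable, and every stable match equals $\mu(a)$ for some pure-strategy Nash equilibrium $a$. Moreover, any action profile $a$ with $\mu(a)=\mu^*$ (the proposer-optimal stable match) is a pure Nash equilibrium that maximizes the welfare $\sum_{i=1}^n u_i(a)$ among all pure Nash equilibria.
   Context: Market: proposers $\mathbf{P}=\{P_1,\dots,P_n\}$ and disjoint acceptors $\mathbf{A}=\{A_1,\dots,A_m\}$. Each proposer $P_i$ has an injective function $O_{P_i}:\mathbf{A}\cup\{\emptyset\}\to[0,1]$ with $O_{P_i}(A_j)>O_{P_i}(\emptyset)=0$; each acceptor $A_j$ has an injective $O_{A_j}:\mathbf{P}\cup\{\emptyset\}\to[0,1]$ with $O_{A_j}(P_i)>O_{A_j}(\emptyset)=0$. Game: the players are the proposers; each $P_i$ chooses $a_i\in\mathbf{A}\cup\{\emptyset\}$. Each acceptor $A_j$ accepts its $O_{A_j}$-most preferred proposer among $\{P_i:a_i=A_j\}$ (if nonempty), rejecting the others, giving a match $\mu(a)$ with $\mu_{P_i}(a)$ the acceptor that accepted $P_i$ (or $\emptyset$) and $\mu_{A_j}(a)$ the proposer accepted by $A_j$ (or $\emptyset$). Utility $u_i(a)=O_{P_i}(\mu_{P_i}(a))$. A match $\mu$ is unstable if some pair $(P_i,A_j)$ has $O_{P_i}(A_j)>O_{P_i}(\mu_{P_i})$ and $O_{A_j}(P_i)>O_{A_j}(\mu_{A_j})$,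 and stable otherwise. The proposer-optimal stable match $\mu^*$ is the stable match such that $O_{P_i}(\mu^*_{P_i})\ge O_{P_i}(\mu'_{P_i})$ for every stable $\mu'$ and every $i$. *)

theory Defs
  imports Complex_Main
begin

text \<open>The acceptor-or-nothing value A_j / \<emptyset> is encoded as 'a option (None = \<emptyset>),
  likewise proposer-or-nothing as 'p option.\<close>

definition market ::
  "'p set \<Rightarrow> 'a set \<Rightarrow> ('p \<Rightarrow> 'a option \<Rightarrow> real) \<Rightarrow> ('a \<Rightarrow> 'p option \<Rightarrow> real) \<Rightarrow> bool" where
  "market P A OP OA \<longleftrightarrow> finite P \<and> finite A \<and>
     (\<forall>p\<in>P. inj_on (OP p) (insert None (Some ` A)) \<and> OP p None = 0 \<and>
        (\<forall>a\<in>A. 0 < OP p (Some a) \<and> OP p (Some a) \<le> 1)) \<and>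
     (\<forall>a\<in>A. inj_on (OA a) (insert None (Some ` P)) \<and> OA a None = 0 \<and>
        (\<forall>p\<in>P. 0 < OA a (Some p) \<and> OA a (Some p) \<le> 1))"

text \<open>Action profiles: functions 'p \<Rightarrow> 'a option; only values on P matter.\<close>
definition valid_profile :: "'p set \<Rightarrow> 'a set \<Rightarrow> ('p \<Rightarrow> 'a option) \<Rightarrow> bool" where
  "valid_profile P A act \<longleftrightarrow> (\<forall>p\<in>P. act p \<in> insert None (Some ` A))"

definition mu :: "'p set \<Rightarrow> ('a \<Rightarrow> 'p option \<Rightarrow> real) \<Rightarrow> ('p \<Rightarrow> 'a option) \<Rightarrow> 'p \<Rightarrow> 'a option" where
  "mu P OA act p =
     (case act p of
        None \<Rightarrow> None
      | Some a \<Rightarrow> (if p \<in> P \<and> (\<forall>q\<in>P. act q = Some a \<and> q \<noteq> p \<longrightarrow> OA a (Some q) < OA a (Some p))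
                  then Some a else None))"

definition utility ::
  "'p set \<Rightarrow> ('p \<Rightarrow> 'a option \<Rightarrow> real) \<Rightarrow> ('a \<Rightarrow> 'p option \<Rightarrow> real) \<Rightarrow> ('p \<Rightarrow> 'a option) \<Rightarrow> 'p \<Rightarrow> real" where
  "utility P OP OA act p = OP p (mu P OA act p)"

definition welfare ::
  "'p set \<Rightarrow> ('p \<Rightarrow> 'a option \<Rightarrow> real) \<Rightarrow> ('a \<Rightarrow> 'p option \<Rightarrow> real) \<Rightarrow> ('p \<Rightarrow> 'a option) \<Rightarrow> real" where
  "welfare P OP OA act = (\<Sum>p\<in>P. utility P OP OA act p)"

definition pure_nash ::
  "'p set \<Rightarrow> 'a set \<Rightarrow> ('p \<Rightarrow> 'a option \<Rightarrow> real) \<Rightarrow> ('a \<Rightarrow> 'p option \<Rightarrow> real) \<Rightarrow> ('p \<Rightarrow> 'a option) \<Rightarrow> bool" where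
  "pure_nash P A OP OA act \<longleftrightarrow> valid_profile P A act \<and>
     (\<forall>p\<in>P. \<forall>x\<in>insert None (Some ` A).
        utility P OP OA (act(p := x)) p \<le> utility P OP OA act p)"

text \<open>A match, represented by its proposer side M :: 'p \<Rightarrow> 'a option (None outside P);
  distinct proposers get distinct acceptors.\<close>
definition is_match :: "'p set \<Rightarrow> 'a set \<Rightarrow> ('p \<Rightarrow> 'a option) \<Rightarrow> bool" where
  "is_match P A M \<longleftrightarrow> (\<forall>p. p \<notin> P \<longrightarrow> M p = None) \<and>
     (\<forall>p\<in>P. M p \<in> insert None (Some ` A)) \<and>
     (\<forall>p\<in>P. \<forall>q\<in>P. M p \<noteq> None \<and> M p = M q \<longrightarrow> p = q)"

definition partner :: "'p set \<Rightarrow> ('p \<Rightarrow> 'a option) \<Rightarrow> 'a \<Rightarrow> 'p option" where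
  "partner P M a = (if \<exists>p\<in>P. M p = Some a then Some (THE p. p \<in> P \<and> M p = Some a) else None)"

definition stable ::
  "'p set \<Rightarrow> 'a set \<Rightarrow> ('p \<Rightarrow> 'a option \<Rightarrow> real) \<Rightarrow> ('a \<Rightarrow> 'p option \<Rightarrow> real) \<Rightarrow> ('p \<Rightarrow> 'a option) \<Rightarrow> bool" where
  "stable P A OP OA M \<longleftrightarrow> is_match P A M \<and>
     \<not> (\<exists>p\<in>P. \<exists>a\<in>A. OP p (Some a) > OP p (M p) \<and> OA a (Some p) > OA a (partner P M a))"

definition proposer_optimal_stable ::
  "'p set \<Rightarrow> 'a set \<Rightarrow> ('p \<Rightarrow> 'a option \<Rightarrow> real) \<Rightarrow> ('a \<Rightarrow> 'p option \<Rightarrow> real) \<Rightarrow> ('p \<Rightarrow> 'a option) \<Rightarrow> bool" where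
  "proposer_optimal_stable P A OP OA M \<longleftrightarrow> stable P A OP OA M \<and>
     (\<forall>M'. stable P A OP OA M' \<longrightarrow> (\<forall>p\<in>P. OP p (M p) \<ge> OP p (M' p)))"

end

theory Submission
  imports Defs
begin

text \<open>A proposer who deviates to acceptor a is accepted exactly when a prefers it to a's current
  partner (or it already holds a). So a unilateral deviation pays off exactly when it creates a
  blocking pair, and the pure Nash equilibria are precisely the profiles whose match is stable.
  A stable match, played as a profile, reproduces itself; and since every equilibrium match is
  stable, the proposer-optimal stable match gives every proposer at least its equilibrium utility.\<close>

lemma mu_eq_Some_iff:
  "mu P OA act p = Some a \<longleftrightarrow>
     act p = Some a \<and> p \<in> P \<and> (\<forall>q\<in>P. act q = Some a \<and> q \<noteq> p \<longrightarrow> OA a (Some q) < OA a (Some p))"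
  by (auto simp: mu_def split: option.splits)

lemma is_match_mu:
  assumes "valid_profile P A act"
  shows "is_match P A (mu P OA act)"
  unfolding is_match_def
proof (intro conjI ballI allI impI)
  fix p assume "p \<notin> P"
  then show "mu P OA act p = None" by (auto simp: mu_def split: option.splits)
next
  fix p assume "p \<in> P"
  then show "mu P OA act p \<in> insert None (Some ` A)"
    using assms by (auto simp: mu_def valid_profile_def split: option.splits)
next
  fix p q assume "p \<in> P" "q \<in> P" "mu P OA act p \<noteq> None \<and> mu P OA act p = mu P OA act q"
  then obtain a where "mu P OA act p = Some a" "mu P OA act q = Some a"
    by (metis option.exhaust)
  with \<open>p \<in> P\<close> \<open>q \<in> P\<close> show "p = q"
    unfolding mu_eq_Some_iff by (auto dest: less_asym)
qed

lemma is_match_imp_valid_profile: "is_match P A M \<Longrightarrow> valid_profile P A M"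
  by (simp add: is_match_def valid_profile_def)

lemma mu_of_match:
  assumes "is_match P A M"
  shows "mu P OA M = M"
proof
  fix p
  show "mu P OA M p = M p"
  proof (cases "M p")
    case None
    then show ?thesis by (simp add: mu_def)
  next
    case (Some a)
    with assms have p: "p \<in> P"
      unfolding is_match_def by (metis option.distinct(1))
    moreover have "\<forall>q\<in>P. M q = Some a \<longrightarrow> q = p"
      using assms Some p unfolding is_match_def by auto
    ultimately show ?thesis
      unfolding Some mu_eq_Some_iff by blast
  qed
qed

lemma partner_eq_Some_iff:
  assumes "is_match P A M"
  shows "partner P M a = Some p \<longleftrightarrow> p \<in> P \<and> M p = Some a"
proof -
  have the_eq: "(THE q. q \<in> P \<and> M q = Some a) = p" if "p \<in> P" "M p = Some a" for p
  proof (rule the_equality)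
    show "p \<in> P \<and> M p = Some a" using that ..
    show "q = p" if "q \<in> P \<and> M q = Some a" for q
      using assms \<open>p \<in> P\<close> \<open>M p = Some a\<close> that unfolding is_match_def by auto
  qed
  show ?thesis
  proof
    assume "partner P M a = Some p"
    then obtain q where "q \<in> P" "M q = Some a" "(THE q. q \<in> P \<and> M q = Some a) = p"
      unfolding partner_def by (auto split: if_splits)
    with the_eq show "p \<in> P \<and> M p = Some a" by auto
  next
    assume "p \<in> P \<and> M p = Some a"
    with the_eq show "partner P M a = Some p" unfolding partner_def by auto
  qed
qed

lemma partner_eq_None: "\<not> (\<exists>p\<in>P. M p = Some a) \<Longrightarrow> partner P M a = None"
  by (simp add: partner_def)

lemma mu_proposal_received_imp_matched:
  assumes "finite P" and "inj_on (OA a) (Some ` P)" and "q \<in> P" and "act q = Some a"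
  shows "\<exists>m\<in>P. mu P OA act m = Some a"
proof -
  let ?S = "{q\<in>P. act q = Some a}"
  have "finite ?S" "?S \<noteq> {}"
    using assms by auto
  then obtain m where "is_arg_min (\<lambda>q. - OA a (Some q)) (\<lambda>q. q \<in> ?S) m"
    using ex_is_arg_min_if_finite by blast
  then have m: "m \<in> P" "act m = Some a" and le: "\<And>q. q \<in> ?S \<Longrightarrow> OA a (Some q) \<le> OA a (Some m)"
    unfolding is_arg_min_def by force+
  have "OA a (Some q) < OA a (Some m)" if "q \<in> P" "act q = Some a" "q \<noteq> m" for q
    using le[of q] inj_onD[OF assms(2), of "Some q" "Some m"] that m by fastforce
  with m show ?thesis by (auto simp: mu_eq_Some_iff)
qed

lemma mu_deviation_accepted_iff:
  assumes "market P A OP OA" and "valid_profile P A act" and "p \<in> P" and "a \<in> A"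
  shows "mu P OA (act(p := Some a)) p = Some a \<longleftrightarrow>
           OA a (partner P (mu P OA act) a) < OA a (Some p) \<or> mu P OA act p = Some a"
    (is "?accepted \<longleftrightarrow> ?prefers \<or> ?holds")
proof
  have fin: "finite P" and inj: "inj_on (OA a) (Some ` P)" and OA_pos: "OA a None = 0" "0 < OA a (Some p)"
    using assms unfolding market_def by (auto intro: inj_on_subset)
  have matched: "is_match P A (mu P OA act)"
    using assms(2) by (rule is_match_mu)
  show "?accepted \<Longrightarrow> ?prefers \<or> ?holds"
  proof (cases "\<exists>q\<in>P. mu P OA act q = Some a")
    case False
    with OA_pos show ?thesis by (simp add: partner_eq_None)
  next
    case True
    then obtain q where q: "q \<in> P" "mu P OA act q = Some a" by blast
    then have "partner P (mu P OA act) a = Some q" "act q = Some a"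
      using partner_eq_Some_iff[OF matched] by (auto simp: mu_eq_Some_iff)
    then show "?accepted \<Longrightarrow> ?thesis"
      using q by (cases "q = p") (auto simp: mu_eq_Some_iff)
  qed
  show "?prefers \<or> ?holds \<Longrightarrow> ?accepted"
  proof (elim disjE)
    assume prefers: ?prefers
    have "OA a (Some q) < OA a (Some p)" if q: "q \<in> P" "act q = Some a" "q \<noteq> p" for q
    proof -
      obtain m where m: "m \<in> P" "mu P OA act m = Some a"
        using mu_proposal_received_imp_matched[of P OA a q act] fin inj q by blast
      then have "OA a (Some q) \<le> OA a (Some m)"
        using q by (cases "q = m") (auto simp: mu_eq_Some_iff)
      also have "\<dots> < OA a (Some p)"
        using prefers m by (simp add: partner_eq_Some_iff[OF matched, of a m, THEN iffD2])
      finally show ?thesis .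
    qed
    with assms(3) show ?accepted by (simp add: mu_eq_Some_iff)
  next
    assume ?holds
    then have "act(p := Some a) = act" by (auto simp: mu_eq_Some_iff)
    with \<open>?holds\<close> show ?accepted by simp
  qed
qed

lemma utility_nonneg:
  assumes "market P A OP OA" and "valid_profile P A act" and "p \<in> P"
  shows "0 \<le> utility P OP OA act p"
proof -
  have "mu P OA act p \<in> insert None (Some ` A)"
    using is_match_mu[OF assms(2)] assms(3) unfolding is_match_def by blast
  with assms(1,3) show ?thesis
    unfolding market_def utility_def by (auto intro: less_imp_le)
qed

lemma pure_nash_iff_stable:
  assumes market: "market P A OP OA"
  shows "pure_nash P A OP OA act \<longleftrightarrow> valid_profile P A act \<and> stable P A OP OA (mu P OA act)"
proof (intro iffI conjI; (elim conjE)?)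
  assume nash: "pure_nash P A OP OA act"
  then show valid: "valid_profile P A act" by (simp add: pure_nash_def)
  have "False" if "p \<in> P" "a \<in> A" and gain: "OP p (mu P OA act p) < OP p (Some a)"
    and blocks: "OA a (partner P (mu P OA act) a) < OA a (Some p)" for p a
  proof -
    have "utility P OP OA (act(p := Some a)) p = OP p (Some a)"
      using mu_deviation_accepted_iff[OF market valid that(1,2)] blocks
      by (simp add: utility_def)
    moreover have "utility P OP OA (act(p := Some a)) p \<le> utility P OP OA act p"
      using nash that(1,2) unfolding pure_nash_def by blast
    ultimately show False
      using gain by (simp add: utility_def)
  qed
  then show "stable P A OP OA (mu P OA act)"
    using is_match_mu[OF valid] unfolding stable_def by blast
next
  assume valid: "valid_profile P A act" and st: "stable P A OP OA (mu P OA act)"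
  have "utility P OP OA (act(p := x)) p \<le> utility P OP OA act p"
    if p: "p \<in> P" and x: "x \<in> insert None (Some ` A)" for p x
  proof (cases "mu P OA (act(p := x)) p")
    case None
    then show ?thesis
      using utility_nonneg[OF market valid p] market p by (simp add: utility_def market_def)
  next
    case (Some a)
    then have "x = Some a" "a \<in> A"
      using x by (auto simp: mu_eq_Some_iff)
    then have "OA a (partner P (mu P OA act) a) < OA a (Some p) \<or> mu P OA act p = Some a"
      using mu_deviation_accepted_iff[OF market valid p] Some by simp
    then show ?thesis
      using st p \<open>a \<in> A\<close> Some unfolding stable_def utility_def by (force simp: not_less)
  qed
  with valid show "pure_nash P A OP OA act"
    unfolding pure_nash_def by blast
qed

theorem mainTheorem2:
  fixes P :: "'p set" and A :: "'a set"
    and OP :: "'p \<Rightarrow> 'a option \<Rightarrow> real" and OA :: "'a \<Rightarrow> 'p option \<Rightarrow> real"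
  assumes "market P A OP OA"
  shows "(\<forall>act. pure_nash P A OP OA act \<longrightarrow> stable P A OP OA (mu P OA act))
       \<and> (\<forall>M. stable P A OP OA M \<longrightarrow> (\<exists>act. pure_nash P A OP OA act \<and> mu P OA act = M))
       \<and> (\<forall>Mstar act. proposer_optimal_stable P A OP OA Mstar \<and> valid_profile P A act
              \<and> mu P OA act = Mstar \<longrightarrow>
            pure_nash P A OP OA act \<and>
            (\<forall>b. pure_nash P A OP OA b \<longrightarrow> welfare P OP OA b \<le> welfare P OP OA act))"
proof (intro conjI allI impI; (elim conjE)?)
  fix act assume "pure_nash P A OP OA act"
  then show "stable P A OP OA (mu P OA act)"
    using pure_nash_iff_stable[OF assms] by blast
next
  fix M assume st: "stable P A OP OA M"
  then have "is_match P A M" by (simp add: stable_def)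
  then have "valid_profile P A M" and "mu P OA M = M"
    by (simp_all add: is_match_imp_valid_profile mu_of_match)
  with st show "\<exists>act. pure_nash P A OP OA act \<and> mu P OA act = M"
    using pure_nash_iff_stable[OF assms] by metis
next
  fix Mstar act assume opt: "proposer_optimal_stable P A OP OA Mstar"
    and valid: "valid_profile P A act" and mu_act: "mu P OA act = Mstar"
  then show "pure_nash P A OP OA act"
    using pure_nash_iff_stable[OF assms] by (simp add: proposer_optimal_stable_def)
  fix b assume "pure_nash P A OP OA b"
  then have "stable P A OP OA (mu P OA b)"
    using pure_nash_iff_stable[OF assms] by blast
  with opt mu_act have "\<forall>p\<in>P. utility P OP OA b p \<le> utility P OP OA act p"
    by (simp add: proposer_optimal_stable_def utility_def)
  then show "welfare P OP OA b \<le> welfare P OP OA act"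
    unfolding welfare_def by (simp add: sum_mono)
qed

end
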